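(* For every $0<\sigma<1$ and every integer $n\ge1$, $$\sum_{j=0}^n\sigma^{\sqrt{j}+\sqrt{n-j}-\sqrt{n}}\le\frac{20}{(1-\sigma)^2}.$$ *)

theory Defs
  imports Complex_Main
begin

end

theory Submission
  imports Defs
begin

text \<open>For \<open>j \<le> n - j\<close> the exponent is at least \<open>sqrt j / 2\<close>, so every summand is at most
  \<open>\<sigma> powr (sqrt j / 2) + \<sigma> powr (sqrt (n - j) / 2)\<close>. Grouping the indices \<open>j\<close> into the blocks
  \<open>m\<^sup>2 \<le> j < (m + 1)\<^sup>2\<close> of size \<open>2m + 1\<close> bounds \<open>\<Sum>\<^sub>j \<sigma> powr (sqrt j / 2)\<close> by
  \<open>\<Sum>\<^sub>m (2m + 1) \<tau>\<^sup>m \<le> 2 / (1 - \<tau>)\<^sup>2\<close> with \<open>\<tau> = sqrt \<sigma>\<close>, and \<open>1 - \<sigma> \<le> 2 (1 - \<tau>)\<close>.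
  This gives the bound with 16 in place of 20.\<close>

lemma sqrt_add_le_sqrt_add_half_sqrt:
  fixes a b :: real
  assumes "0 \<le> a" and "a \<le> b"
  shows "sqrt (a + b) \<le> sqrt b + sqrt a / 2"
proof (rule real_le_lsqrt)
  define x y where "x = sqrt a" and "y = sqrt b"
  have "0 \<le> x" "x \<le> y" using assms by (auto simp: x_def y_def)
  then have "x * x \<le> x * y" by (intro mult_left_mono)
  moreover have "a + b = x * x + y * y" using assms by (simp add: x_def y_def)
  moreover have "(y + x / 2)\<^sup>2 = y * y + x * y + x * x / 4"
    by (simp add: power2_eq_square algebra_simps)
  moreover have "0 \<le> x * x" by simp
  ultimately show "a + b \<le> (y + x / 2)\<^sup>2" by linarith
qed (use assms in simp_all)

lemma half_sqrt_min_le_sqrt_add_sqrt_minus: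
  fixes a b :: real
  assumes "0 \<le> a" and "0 \<le> b"
  shows "sqrt (min a b) / 2 \<le> sqrt a + sqrt b - sqrt (a + b)"
  using sqrt_add_le_sqrt_add_half_sqrt[of a b] sqrt_add_le_sqrt_add_half_sqrt[of b a] assms
  by (cases "a \<le> b") (simp_all add: min_def add.commute)

lemma sum_odd_times_power_times_square:
  fixes t :: real
  shows "(\<Sum>m<M. (2 * real m + 1) * t ^ m) * (1 - t)\<^sup>2
           = 1 + t - t ^ M * ((2 * real M + 1) - (2 * real M - 1) * t)"
  by (induction M) (simp_all add: algebra_simps power2_eq_square)

lemma sum_odd_times_power_le:
  fixes t :: real
  assumes "0 \<le> t" and "t < 1"
  shows "(\<Sum>m<M. (2 * real m + 1) * t ^ m) \<le> 2 / (1 - t)\<^sup>2"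
proof -
  have "(2 * real M - 1) * t \<le> 2 * real M + 1"
  proof (cases "M = 0")
    case False
    then have "(2 * real M - 1) * t \<le> (2 * real M - 1) * 1"
      using assms by (intro mult_left_mono) auto
    then show ?thesis by simp
  qed (use assms in simp)
  then have "0 \<le> t ^ M * ((2 * real M + 1) - (2 * real M - 1) * t)"
    using assms by simp
  then have "(\<Sum>m<M. (2 * real m + 1) * t ^ m) * (1 - t)\<^sup>2 \<le> 2"
    using assms sum_odd_times_power_times_square[of t M] by simp
  then show ?thesis
    using assms by (simp add: field_simps)
qed

lemma sum_sqrt_le_sum_odd_times:
  fixes f :: "real \<Rightarrow> real"
  assumes antimono: "\<And>x y. 0 \<le> x \<Longrightarrow> x \<le> y \<Longrightarrow> f y \<le> f x"
  shows "(\<Sum>j<M\<^sup>2. f (sqrt (real j))) \<le> (\<Sum>m<M. (2 * real m + 1) * f (real m))"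
proof (induction M)
  case (Suc M)
  have "M\<^sup>2 \<le> (Suc M)\<^sup>2" by (simp add: power_mono)
  then have split: "(\<Sum>j<(Suc M)\<^sup>2. f (sqrt (real j)))
      = (\<Sum>j<M\<^sup>2. f (sqrt (real j))) + (\<Sum>j\<in>{M\<^sup>2..<(Suc M)\<^sup>2}. f (sqrt (real j)))"
    using sum.atLeastLessThan_concat[of 0 "M\<^sup>2" "(Suc M)\<^sup>2" "\<lambda>j. f (sqrt (real j))"]
    by (simp add: atLeast0LessThan)
  have "(\<Sum>j\<in>{M\<^sup>2..<(Suc M)\<^sup>2}. f (sqrt (real j)))
        \<le> of_nat (card {M\<^sup>2..<(Suc M)\<^sup>2}) * f (real M)"
  proof (rule sum_bounded_above)
    fix j assume "j \<in> {M\<^sup>2..<(Suc M)\<^sup>2}"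
    then have "real M ^ 2 \<le> real j" by (simp flip: of_nat_power)
    then show "f (sqrt (real j)) \<le> f (real M)"
      by (intro antimono) (auto intro: real_le_rsqrt)
  qed
  also have "card {M\<^sup>2..<(Suc M)\<^sup>2} = 2 * M + 1" by (simp add: power2_eq_square)
  finally show ?case using split Suc by (simp add: add.commute)
qed simp

lemma one_minus_le_two_times_one_minus_sqrt:
  fixes \<sigma> :: real
  assumes "0 \<le> \<sigma>" and "\<sigma> \<le> 1"
  shows "1 - \<sigma> \<le> 2 * (1 - sqrt \<sigma>)"
proof -
  have "1 - \<sigma> = (1 - sqrt \<sigma>) * (1 + sqrt \<sigma>)"
    using assms by (simp add: algebra_simps)
  also have "\<dots> \<le> (1 - sqrt \<sigma>) * 2"
    using assms by (intro mult_left_mono) auto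
  finally show ?thesis by simp
qed

lemma sum_powr_half_sqrt_le:
  fixes \<sigma> :: real
  assumes "0 < \<sigma>" and "\<sigma> < 1"
  shows "(\<Sum>j=0..n. \<sigma> powr (sqrt (real j) / 2)) \<le> 8 / (1 - \<sigma>)\<^sup>2"
proof -
  have "(\<Sum>j=0..n. \<sigma> powr (sqrt (real j) / 2)) \<le> (\<Sum>j<(n + 1)\<^sup>2. \<sigma> powr (sqrt (real j) / 2))"
    by (rule sum_mono2) (auto simp: power2_eq_square)
  also have "\<dots> \<le> (\<Sum>m<n + 1. (2 * real m + 1) * \<sigma> powr (real m / 2))"
    using assms by (intro sum_sqrt_le_sum_odd_times) (auto intro: powr_mono')
  also have "\<dots> = (\<Sum>m<n + 1. (2 * real m + 1) * sqrt \<sigma> ^ m)"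
    using assms by (simp add: powr_half_sqrt[symmetric] powr_power)
  also have "\<dots> \<le> 2 / (1 - sqrt \<sigma>)\<^sup>2"
    using assms by (intro sum_odd_times_power_le) auto
  also have "\<dots> = 8 / (2 * (1 - sqrt \<sigma>))\<^sup>2"
    by (simp only: power_mult_distrib) simp
  also have "\<dots> \<le> 8 / (1 - \<sigma>)\<^sup>2"
    using assms one_minus_le_two_times_one_minus_sqrt[of \<sigma>]
    by (intro divide_left_mono power_mono) auto
  finally show ?thesis .
qed

theorem lemma5p8:
  fixes \<sigma> :: real and n :: nat
  assumes "0 < \<sigma>" and "\<sigma> < 1" and "n \<ge> 1"
  shows "(\<Sum>j=0..n. \<sigma> powr (sqrt (real j) + sqrt (real (n - j)) - sqrt (real n)))
           \<le> 20 / (1 - \<sigma>)^2"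
proof -
  define g where "g j = \<sigma> powr (sqrt (real j) / 2)" for j
  have term_le: "\<sigma> powr (sqrt (real j) + sqrt (real (n - j)) - sqrt (real n)) \<le> g j + g (n - j)"
    if "j \<le> n" for j
  proof -
    have "\<sigma> powr (sqrt (real j) + sqrt (real (n - j)) - sqrt (real n)) \<le> g (min j (n - j))"
      using assms that half_sqrt_min_le_sqrt_add_sqrt_minus[of "real j" "real (n - j)"]
      unfolding g_def by (intro powr_mono') (auto simp: of_nat_min)
    also have "\<dots> \<le> g j + g (n - j)"
      by (simp add: g_def min_def)
    finally show ?thesis .
  qed
  have "(\<Sum>j=0..n. \<sigma> powr (sqrt (real j) + sqrt (real (n - j)) - sqrt (real n)))
        \<le> (\<Sum>j=0..n. g j) + (\<Sum>j=0..n. g (n - j))"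
    unfolding sum.distrib[symmetric] by (rule sum_mono, rule term_le) simp
  also have "(\<Sum>j=0..n. g (n - j)) = (\<Sum>j=0..n. g j)"
    using sum.atLeastAtMost_rev[of g 0 n] by simp
  also have "(\<Sum>j=0..n. g j) + (\<Sum>j=0..n. g j) \<le> 16 / (1 - \<sigma>)\<^sup>2"
    using sum_powr_half_sqrt_le[OF assms(1,2), of n] unfolding g_def by simp
  also have "\<dots> \<le> 20 / (1 - \<sigma>)^2"
    using assms by (simp add: divide_right_mono)
  finally show ?thesis .
qed

end
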